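(* Let $b\in\mathbb{R}^n$, $c\in\mathbb{R}^m$, $D\in\mathbb{R}^{m\times n}$ surjective, $K\in\{0,\ldots,m-1\}$, $\gamma>0$, and let $x^*$ be a d-stationary point of $$\min_{x\in\mathbb{R}^n}\ \tfrac12\|b-x\|_2^2+\gamma T_{K,m,1}(Dx-c).$$ Let $\overline{x}$ be any point with $D\overline{x}=c$. If $\gamma>\|b-\overline{x}\|_2/\sigma_{\min}(D)$, then $T_{K,m,1}(Dx^*-c)=0$.
   Context: $T_{K,m,1}(z)$ for $z\in\mathbb{R}^m$ is the sum of the $m-K$ smallest values among $|z_1|,\ldots,|z_m|$. $\sigma_{\min}(D)$ is the smallest nonzero singular value of $D$. A point is d-stationary if the directional derivative of the objective there is $\ge0$ in every direction. *)

theory Defs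
  imports "HOL-Analysis.Analysis" "HOL-Library.Multiset"
begin

definition trimmed_l1 :: "nat \<Rightarrow> real ^ 'm \<Rightarrow> real" where
  "trimmed_l1 K z = sum_list (take (CARD('m) - K)
      (sorted_list_of_multiset (image_mset (\<lambda>i. \<bar>z $ i\<bar>) (mset_set (UNIV :: 'm set)))))"

definition sigma_min :: "real ^ 'n ^ 'm \<Rightarrow> real" where
  "sigma_min D = sqrt (Min {e. e \<noteq> 0 \<and> (\<exists>v. v \<noteq> 0 \<and> (transpose D ** D) *v v = e *\<^sub>R v)})"

definition d_stationary :: "('a::real_normed_vector \<Rightarrow> real) \<Rightarrow> 'a \<Rightarrow> bool" where
  "d_stationary F x \<longleftrightarrow> (\<forall>d. \<exists>L. ((\<lambda>t. (F (x + t *\<^sub>R d) - F x) / t) \<longlongrightarrow> L) (at_right 0) \<and> L \<ge> 0)"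

end

theory Submission
  imports Defs
begin

text \<open>Let \<open>x\<close> be d-stationary and suppose \<open>T = T\<^sub>K(D x - c) > 0\<close>; fix \<open>m - K\<close> indices \<open>I\<close> on
  which \<open>T\<close> is attained. Moving along a direction \<open>d\<close> with \<open>(D d)\<^sub>i = -(D x - c)\<^sub>i\<close> on \<open>I\<close>
  scales the penalty terms on \<open>I\<close> by \<open>1 - t\<close>, so stationarity gives \<open>\<gamma> T \<le> \<langle>x - b, d\<rangle>\<close>.
  For \<open>d = xbar - x\<close> this shows \<open>\<parallel>x - b\<parallel> \<le> \<parallel>xbar - b\<parallel>\<close>. For \<open>d\<close> in the row space of \<open>D\<close> with
  \<open>D d\<close> the negated residual on \<open>I\<close> and zero elsewhere, \<open>\<sigma>\<^sub>m\<^sub>i\<^sub>n \<parallel>d\<parallel> \<le> \<parallel>D d\<parallel> \<le> T\<close>, so Cauchy-Schwarz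
  gives \<open>\<gamma> \<sigma>\<^sub>m\<^sub>i\<^sub>n \<le> \<parallel>x - b\<parallel> \<le> \<parallel>xbar - b\<parallel>\<close>, contradicting the choice of \<open>\<gamma>\<close>. The lower bound for
  \<open>\<parallel>D d\<parallel>\<close> on the row space holds because a minimiser of \<open>\<parallel>D d\<parallel>\<close> on its unit sphere is an
  eigenvector of \<open>D\<^sup>T D\<close> with nonzero eigenvalue.\<close>

lemma sum_le_sum_of_lower_part:
  fixes f :: "'a \<Rightarrow> 'b::ordered_comm_monoid_add"
  assumes fin: "finite I" "finite J" and card_eq: "card I = card J"
    and lower: "\<And>j i. j \<in> J \<Longrightarrow> i \<notin> J \<Longrightarrow> f j \<le> f i"
  shows "sum f J \<le> sum f I"
proof -
  have "card (J - I) = card J - card (I \<inter> J)"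
    using fin by (simp add: card_Diff_subset_Int inf_commute)
  also have "\<dots> = card (I - J)"
    using fin card_eq by (simp add: card_Diff_subset_Int)
  finally obtain g where g: "bij_betw g (J - I) (I - J)"
    using finite_same_card_bij[of "J - I" "I - J"] fin by auto
  have "sum f (J - I) \<le> sum (f \<circ> g) (J - I)"
  proof (rule sum_mono)
    fix j
    assume "j \<in> J - I"
    then have "j \<in> J" "g j \<notin> J"
      using bij_betwE[OF g] by auto
    then show "f j \<le> (f \<circ> g) j"
      by (simp add: lower)
  qed
  also have "\<dots> = sum f (I - J)"
    using sum.reindex_bij_betw[OF g] by simp
  finally have "sum f (I \<inter> J) + sum f (J - I) \<le> sum f (I \<inter> J) + sum f (I - J)"
    by (rule add_left_mono)
  then show ?thesis
    using sum.Int_Diff[OF fin(2), of f I] sum.Int_Diff[OF fin(1), of f J]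
    by (simp add: inf_commute)
qed

lemma trimmed_l1_smallest_indices:
  fixes z :: "real ^ 'm"
  obtains J where "card J = CARD('m) - K"
    and "\<And>j i. j \<in> J \<Longrightarrow> i \<notin> J \<Longrightarrow> \<bar>z $ j\<bar> \<le> \<bar>z $ i\<bar>"
    and "trimmed_l1 K z = (\<Sum>j\<in>J. \<bar>z $ j\<bar>)"
proof -
  define f where "f i = \<bar>z $ i\<bar>" for i
  define k where "k = CARD('m) - K"
  obtain ls where ls: "distinct ls" "set ls = (UNIV :: 'm set)"
    using finite_distinct_list[of "UNIV :: 'm set"] by auto
  define js where "js = sort_key f ls"
  have mset_js: "mset js = mset ls"
    unfolding js_def by simp
  have distinct_js: "distinct js"
    using mset_js ls(1) by (metis distinct_count_atmost_1 count_mset_0_iff set_mset_mset)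
  have set_js: "set js = UNIV"
    using mset_js ls(2) by (metis set_mset_mset)
  have sorted_js: "sorted (map f js)"
    unfolding js_def by simp
  have "image_mset f (mset_set UNIV) = mset (map f js)"
    using mset_js ls by (metis mset_map mset_set_set)
  then have "sorted_list_of_multiset (image_mset f (mset_set UNIV)) = map f js"
    using sorted_js by (metis sorted_list_of_multiset_mset sorted_sort_id)
  then have "trimmed_l1 K z = sum_list (take k (map f js))"
    unfolding trimmed_l1_def f_def k_def by simp
  also have "\<dots> = (\<Sum>j\<in>set (take k js). f j)"
    using distinct_js by (simp add: take_map sum_list_distinct_conv_sum_set)
  finally have sum_eq: "trimmed_l1 K z = (\<Sum>j\<in>set (take k js). f j)" .
  have lower: "f j \<le> f i" if "j \<in> set (take k js)" "i \<notin> set (take k js)" for i j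
  proof -
    have "i \<in> set (drop k js)"
      using that(2) set_js by (metis UNIV_I Un_iff append_take_drop_id set_append)
    moreover have "sorted (map f (take k js) @ map f (drop k js))"
      using sorted_js by (metis append_take_drop_id map_append)
    ultimately show ?thesis
      using that(1) by (simp add: sorted_append)
  qed
  have "length js = CARD('m)"
    using distinct_js set_js by (metis distinct_card)
  then have "card (set (take k js)) = k"
    using distinct_js by (simp add: distinct_card k_def)
  then show ?thesis
    using that[of "set (take k js)"] lower sum_eq unfolding f_def k_def by simp
qed

lemma trimmed_l1_le_sum:
  fixes z :: "real ^ 'm"
  assumes "card I = CARD('m) - K"
  shows "trimmed_l1 K z \<le> (\<Sum>i\<in>I. \<bar>z $ i\<bar>)"
proof -
  obtain J where "card J = CARD('m) - K"
    and "\<And>j i. j \<in> J \<Longrightarrow> i \<notin> J \<Longrightarrow> \<bar>z $ j\<bar> \<le> \<bar>z $ i\<bar>"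
    and "trimmed_l1 K z = (\<Sum>j\<in>J. \<bar>z $ j\<bar>)"
    using trimmed_l1_smallest_indices[where z = z and K = K] by blast
  with assms show ?thesis
    using sum_le_sum_of_lower_part[of I J "\<lambda>i. \<bar>z $ i\<bar>"] by simp
qed

lemma trimmed_l1_nonneg: "trimmed_l1 K z \<ge> 0"
proof -
  obtain J where "trimmed_l1 K z = (\<Sum>j\<in>J. \<bar>z $ j\<bar>)"
    using trimmed_l1_smallest_indices[where z = z and K = K] by metis
  then show ?thesis
    by (simp add: sum_nonneg)
qed

lemma power2_norm_add_scaleR:
  fixes x y :: "'a::real_inner"
  shows "(norm (x + t *\<^sub>R y))\<^sup>2 = (norm x)\<^sup>2 + 2 * t * inner x y + t\<^sup>2 * (norm y)\<^sup>2"
  unfolding power2_norm_eq_inner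
  by (simp add: inner_add_left inner_add_right algebra_simps power2_eq_square inner_commute)

lemma d_stationary_quadratic_descent:
  fixes b x d :: "'a::real_inner" and G :: "'a \<Rightarrow> real"
  assumes stat: "d_stationary (\<lambda>x. (1/2) * (norm (b - x))\<^sup>2 + \<gamma> * G x) x"
    and "\<gamma> \<ge> 0"
    and descent: "\<And>t. 0 < t \<Longrightarrow> t < 1 \<Longrightarrow> G (x + t *\<^sub>R d) \<le> G x - t * a"
  shows "\<gamma> * a \<le> inner (x - b) d"
proof -
  define F where "F x = (1/2) * (norm (b - x))\<^sup>2 + \<gamma> * G x" for x
  obtain L where lim: "((\<lambda>t. (F (x + t *\<^sub>R d) - F x) / t) \<longlongrightarrow> L) (at_right 0)" and "L \<ge> 0"
    using stat unfolding d_stationary_def F_def by blast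
  define h where "h t = inner (x - b) d + t * (norm d)\<^sup>2 / 2 - \<gamma> * a" for t :: real
  have "(h \<longlongrightarrow> h 0) (at_right 0)"
    unfolding h_def by (intro tendsto_intros) simp_all
  moreover have "eventually (\<lambda>t. (F (x + t *\<^sub>R d) - F x) / t \<le> h t) (at_right 0)"
    unfolding eventually_at_right_field
  proof (intro exI[of _ 1] conjI allI impI)
    fix t :: real
    assume t: "0 < t" "t < 1"
    have "(norm (b - (x + t *\<^sub>R d)))\<^sup>2 = (norm ((b - x) + (- t) *\<^sub>R d))\<^sup>2"
      by (simp add: algebra_simps)
    also have "\<dots> = (norm (b - x))\<^sup>2 + 2 * t * inner (x - b) d + t\<^sup>2 * (norm d)\<^sup>2"
      unfolding power2_norm_add_scaleR by (simp add: inner_diff_left algebra_simps)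
    moreover have "\<gamma> * G (x + t *\<^sub>R d) \<le> \<gamma> * (G x - t * a)"
      using descent[OF t] \<open>\<gamma> \<ge> 0\<close> by (rule mult_left_mono)
    ultimately have "F (x + t *\<^sub>R d) - F x \<le> t * h t"
      unfolding F_def h_def by (simp add: algebra_simps power2_eq_square)
    then show "(F (x + t *\<^sub>R d) - F x) / t \<le> h t"
      using t by (simp add: divide_le_eq mult.commute)
  qed simp
  ultimately have "L \<le> h 0"
    using lim by (intro tendsto_le[OF trivial_limit_at_right_real])
  with \<open>L \<ge> 0\<close> show ?thesis
    by (simp add: h_def)
qed

lemma d_stationary_trimmed_l1_descent:
  fixes b x d :: "real ^ 'n" and c :: "real ^ 'm" and D :: "real ^ 'n ^ 'm"
  assumes stat: "d_stationary (\<lambda>x. (1/2) * (norm (b - x))\<^sup>2 + \<gamma> * trimmed_l1 K (D *v x - c)) x"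
    and "\<gamma> \<ge> 0"
    and card_I: "card I = CARD('m) - K"
    and attained: "trimmed_l1 K (D *v x - c) = (\<Sum>i\<in>I. \<bar>(D *v x - c) $ i\<bar>)"
    and cancels: "\<And>i. i \<in> I \<Longrightarrow> (D *v d) $ i = - (D *v x - c) $ i"
  shows "\<gamma> * trimmed_l1 K (D *v x - c) \<le> inner (x - b) d"
proof (rule d_stationary_quadratic_descent[OF stat \<open>\<gamma> \<ge> 0\<close>])
  fix t :: real
  assume "0 < t" "t < 1"
  define z where "z = D *v x - c"
  have "D *v (x + t *\<^sub>R d) - c = z + t *\<^sub>R (D *v d)"
    unfolding z_def by (simp add: matrix_vector_right_distrib matrix_vector_mult_scaleR algebra_simps)
  then have "trimmed_l1 K (D *v (x + t *\<^sub>R d) - c) \<le> (\<Sum>i\<in>I. \<bar>(z + t *\<^sub>R (D *v d)) $ i\<bar>)"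
    using trimmed_l1_le_sum[OF card_I] by metis
  also have "\<dots> = (\<Sum>i\<in>I. \<bar>(1 - t) * z $ i\<bar>)"
    by (intro sum.cong) (simp_all add: z_def cancels algebra_simps)
  also have "\<dots> = (\<Sum>i\<in>I. (1 - t) * \<bar>z $ i\<bar>)"
    using \<open>t < 1\<close> by (simp add: abs_mult)
  also have "\<dots> = trimmed_l1 K z - t * trimmed_l1 K z"
    using attained by (simp add: z_def sum_distrib_left left_diff_distrib sum_subtractf)
  finally show "trimmed_l1 K (D *v (x + t *\<^sub>R d) - c) \<le> trimmed_l1 K (D *v x - c) - t * trimmed_l1 K (D *v x - c)"
    unfolding z_def .
qed

lemma norm_restrict_le_sum_abs:
  fixes x :: "real ^ 'n"
  shows "norm (\<chi> i. if i \<in> I then x $ i else 0) \<le> (\<Sum>i\<in>I. \<bar>x $ i\<bar>)"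
proof -
  have "norm (\<chi> i. if i \<in> I then x $ i else 0) \<le> (\<Sum>i\<in>UNIV. if i \<in> I then \<bar>x $ i\<bar> else 0)"
    using norm_le_l1_cart[of "\<chi> i. if i \<in> I then x $ i else 0"] by (simp add: if_distrib)
  also have "\<dots> = (\<Sum>i\<in>I. \<bar>x $ i\<bar>)"
    by (simp add: sum.If_cases)
  finally show ?thesis .
qed

lemma norm_diff_le_of_inner_nonneg:
  fixes b x y :: "'a::real_inner"
  assumes "0 \<le> inner (x - b) (y - x)"
  shows "norm (x - b) \<le> norm (y - b)"
proof -
  have "y - b = (y - x) + (x - b)"
    by simp
  then have "inner (x - b) (y - b) = inner (x - b) (y - x) + inner (x - b) (x - b)"
    by (simp only: inner_add_right)
  then have "norm (x - b) * norm (x - b) \<le> inner (x - b) (y - b)"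
    using assms by (simp add: power2_norm_eq_inner flip: power2_eq_square)
  also have "\<dots> \<le> norm (x - b) * norm (y - b)"
    by (rule norm_cauchy_schwarz)
  finally show ?thesis
    by (cases "norm (x - b) = 0") (simp_all add: mult_le_cancel_left)
qed

lemma finite_eigenvalues_of_symmetric:
  fixes A :: "real ^ 'n ^ 'n"
  assumes "transpose A = A"
  shows "finite {e. \<exists>v. v \<noteq> 0 \<and> A *v v = e *\<^sub>R v}"
proof -
  define E where "E = {e. \<exists>v. v \<noteq> 0 \<and> A *v v = e *\<^sub>R v}"
  define g where "g e = (SOME v. v \<noteq> 0 \<and> A *v v = e *\<^sub>R v)" for e
  have g: "g e \<noteq> 0" "A *v g e = e *\<^sub>R g e" if "e \<in> E" for e
    using someI_ex[of "\<lambda>v. v \<noteq> 0 \<and> A *v v = e *\<^sub>R v"] that unfolding E_def g_def by auto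
  have orth: "inner (g e1) (g e2) = 0" if "e1 \<in> E" "e2 \<in> E" "e1 \<noteq> e2" for e1 e2
  proof -
    have "e1 * inner (g e1) (g e2) = inner (A *v g e1) (g e2)"
      using g(2)[OF that(1)] by simp
    also have "\<dots> = inner (g e1) (A *v g e2)"
      by (metis assms dot_lmul_matrix vector_transpose_matrix)
    also have "\<dots> = e2 * inner (g e1) (g e2)"
      using g(2)[OF that(2)] by simp
    finally show ?thesis
      using that(3) by simp
  qed
  have "inj_on g E"
    using orth g(1) by (metis inj_onI inner_eq_zero_iff)
  moreover have "independent (g ` E)"
    using orth g(1) by (intro pairwise_orthogonal_independent) (auto simp: pairwise_def orthogonal_def)
  then have "finite (g ` E)"
    using independent_bound by blast
  ultimately show ?thesis
    unfolding E_def[symmetric] using finite_imageD by blast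
qed

lemma gram_eigenvalue_nonneg:
  fixes D :: "real ^ 'n ^ 'm"
  assumes "v \<noteq> 0" and "(transpose D ** D) *v v = e *\<^sub>R v"
  shows "e \<ge> 0"
proof -
  have "e * inner v v = inner ((D *v v) v* D) v"
    using assms(2) by (simp flip: matrix_vector_mul_assoc)
  also have "\<dots> = inner (D *v v) (D *v v)"
    by (rule dot_lmul_matrix)
  finally have "0 \<le> e * inner v v"
    by simp
  with assms(1) show ?thesis
    by (simp add: zero_le_mult_iff order_antisym_conv)
qed

definition row_space :: "real ^ 'n ^ 'm \<Rightarrow> (real ^ 'n) set" where
  "row_space D = range (\<lambda>y. y v* D)"

lemma subspace_row_space: "subspace (row_space D)"
  using linear_subspace_image[OF matrix_vector_mul_linear[of "transpose D"] subspace_UNIV]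
  by (simp add: row_space_def)

lemma gram_in_row_space: "(transpose D ** D) *v x \<in> row_space D"
  unfolding row_space_def by (simp flip: matrix_vector_mul_assoc)

lemma row_space_kernel_trivial:
  assumes "d \<in> row_space D" and "D *v d = 0"
  shows "d = 0"
proof -
  obtain y where "d = y v* D"
    using assms(1) unfolding row_space_def by auto
  then have "inner d d = inner y (D *v d)"
    by (simp add: dot_lmul_matrix)
  with assms(2) show ?thesis
    by simp
qed

lemma surj_row_space_preimage:
  fixes D :: "real ^ 'n ^ 'm"
  assumes "surj (\<lambda>x. D *v x)"
  obtains d where "d \<in> row_space D" and "D *v d = w"
proof -
  obtain x where x: "D *v x = w"
    using assms by (metis surjD)
  obtain p q where p: "p \<in> span (row_space D)"
    and q: "\<And>u. u \<in> span (row_space D) \<Longrightarrow> orthogonal q u" and "x = p + q"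
    using orthogonal_subspace_decomp_exists by blast
  have span_eq: "span (row_space D) = row_space D"
    using subspace_row_space by simp
  have "inner (D *v q) (D *v q) = inner ((D *v q) v* D) q"
    by (simp add: dot_lmul_matrix)
  also have "\<dots> = 0"
  proof -
    have "(D *v q) v* D \<in> span (row_space D)"
      by (intro span_base) (simp add: row_space_def)
    then show ?thesis
      using q orthogonal_def inner_commute by metis
  qed
  finally have "D *v p = w"
    using x \<open>x = p + q\<close> by (simp add: matrix_vector_right_distrib)
  with p span_eq that show ?thesis
    by blast
qed

lemma quadratic_nonneg_imp_linear_coeff_zero:
  fixes a c :: real
  assumes "\<And>t. 0 \<le> t * a + t\<^sup>2 * c"
  shows "a = 0"
proof (rule ccontr)
  assume "a \<noteq> 0"
  define s where "s = 1 / (\<bar>c\<bar> + 1)"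
  have "s > 0" "s * c < 1"
    unfolding s_def by (auto simp: field_simps)
  have "0 \<le> (- s * a) * a + (- s * a)\<^sup>2 * c"
    by (rule assms)
  also have "\<dots> = (s * a\<^sup>2) * (s * c - 1)"
    by (simp add: algebra_simps power2_eq_square)
  also have "\<dots> < 0"
    using \<open>s > 0\<close> \<open>s * c < 1\<close> \<open>a \<noteq> 0\<close> by (intro mult_pos_neg) auto
  finally show False
    by simp
qed

lemma row_space_minimizer_exists:
  fixes D :: "real ^ 'n ^ 'm"
  assumes "d1 \<in> row_space D" and "d1 \<noteq> 0"
  obtains d0 where "d0 \<in> row_space D" and "norm d0 = 1"
    and "\<And>d. d \<in> row_space D \<Longrightarrow> (norm (D *v d0))\<^sup>2 * (norm d)\<^sup>2 \<le> (norm (D *v d))\<^sup>2"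
proof -
  define S where "S = row_space D \<inter> sphere 0 1"
  have "compact S"
    unfolding S_def by (intro closed_Int_compact closed_subspace subspace_row_space compact_sphere)
  moreover have "(1 / norm d1) *\<^sub>R d1 \<in> S"
    unfolding S_def using subspace_scale[OF subspace_row_space assms(1)] assms(2) by simp
  moreover have "continuous_on S (\<lambda>d. (norm (D *v d))\<^sup>2)"
    by (intro continuous_intros linear_continuous_on) simp
  ultimately obtain d0 where d0: "d0 \<in> S" "\<And>d. d \<in> S \<Longrightarrow> (norm (D *v d0))\<^sup>2 \<le> (norm (D *v d))\<^sup>2"
    using continuous_attains_inf[of S "\<lambda>d. (norm (D *v d))\<^sup>2"] by blast
  have "(norm (D *v d0))\<^sup>2 * (norm d)\<^sup>2 \<le> (norm (D *v d))\<^sup>2" if "d \<in> row_space D" for d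
  proof (cases "d = 0")
    case False
    then have "(1 / norm d) *\<^sub>R d \<in> S"
      unfolding S_def using subspace_scale[OF subspace_row_space that] by simp
    then have "(norm (D *v d0))\<^sup>2 \<le> (norm (D *v ((1 / norm d) *\<^sub>R d)))\<^sup>2"
      by (rule d0(2))
    also have "\<dots> = (norm (D *v d))\<^sup>2 / (norm d)\<^sup>2"
      by (simp add: matrix_vector_mult_scaleR power_divide)
    finally show ?thesis
      using False by (simp add: le_divide_eq)
  qed simp
  with d0(1) that show ?thesis
    unfolding S_def by auto
qed

lemma row_space_minimizer_gram_eigenvector:
  fixes D :: "real ^ 'n ^ 'm"
  assumes "d0 \<in> row_space D" and "norm d0 = 1"
    and min: "\<And>d. d \<in> row_space D \<Longrightarrow> (norm (D *v d0))\<^sup>2 * (norm d)\<^sup>2 \<le> (norm (D *v d))\<^sup>2"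
  shows "(transpose D ** D) *v d0 = (norm (D *v d0))\<^sup>2 *\<^sub>R d0"
proof -
  define l where "l = (norm (D *v d0))\<^sup>2"
  define v where "v = (transpose D ** D) *v d0 - l *\<^sub>R d0"
  have v_row: "v \<in> row_space D"
    unfolding v_def
    using subspace_diff[OF subspace_row_space gram_in_row_space subspace_scale[OF subspace_row_space assms(1)]] .
  have "inner (D *v d0) (D *v v) = inner ((D *v d0) v* D) v"
    by (simp add: dot_lmul_matrix)
  also have "\<dots> = inner (v + l *\<^sub>R d0) v"
    by (simp add: v_def flip: matrix_vector_mul_assoc)
  finally have cross: "inner (D *v d0) (D *v v) = (norm v)\<^sup>2 + l * inner d0 v"
    by (simp add: inner_add_left inner_add_right power2_norm_eq_inner inner_commute)
  have "0 \<le> t * (2 * (norm v)\<^sup>2) + t\<^sup>2 * ((norm (D *v v))\<^sup>2 - l * (norm v)\<^sup>2)" for t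
  proof -
    have "d0 + t *\<^sub>R v \<in> row_space D"
      using subspace_add[OF subspace_row_space assms(1) subspace_scale[OF subspace_row_space v_row]] .
    from min[OF this] have "l * (norm (d0 + t *\<^sub>R v))\<^sup>2 \<le> (norm (D *v d0 + t *\<^sub>R (D *v v)))\<^sup>2"
      unfolding l_def by (simp add: matrix_vector_right_distrib matrix_vector_mult_scaleR)
    moreover have "(norm (d0 + t *\<^sub>R v))\<^sup>2 = 1 + 2 * t * inner d0 v + t\<^sup>2 * (norm v)\<^sup>2"
      using assms(2) by (simp add: power2_norm_add_scaleR)
    moreover have "(norm (D *v d0 + t *\<^sub>R (D *v v)))\<^sup>2
        = l + 2 * t * ((norm v)\<^sup>2 + l * inner d0 v) + t\<^sup>2 * (norm (D *v v))\<^sup>2"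
      by (simp add: power2_norm_add_scaleR cross l_def)
    ultimately show ?thesis
      by (simp add: algebra_simps)
  qed
  then have "2 * (norm v)\<^sup>2 = 0"
    by (rule quadratic_nonneg_imp_linear_coeff_zero)
  then show ?thesis
    by (simp add: v_def l_def)
qed

lemma sigma_min_row_space_bound:
  fixes D :: "real ^ 'n ^ 'm"
  assumes "surj (\<lambda>x. D *v x)"
  shows "sigma_min D > 0" and "\<And>d. d \<in> row_space D \<Longrightarrow> sigma_min D * norm d \<le> norm (D *v d)"
proof -
  define E where "E = {e. e \<noteq> 0 \<and> (\<exists>v. v \<noteq> 0 \<and> (transpose D ** D) *v v = e *\<^sub>R v)}"
  have "finite E"
    using finite_eigenvalues_of_symmetric[of "transpose D ** D"]
    unfolding E_def by (rule rev_finite_subset) (auto simp: matrix_transpose_mul)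
  have E_pos: "e > 0" if "e \<in> E" for e
  proof -
    from that obtain v where "e \<noteq> 0" "v \<noteq> 0" "(transpose D ** D) *v v = e *\<^sub>R v"
      unfolding E_def by blast
    then show ?thesis
      using gram_eigenvalue_nonneg by fastforce
  qed
  obtain d1 where d1: "d1 \<in> row_space D" "D *v d1 = (\<chi> i. 1)"
    using surj_row_space_preimage[OF assms] by blast
  have "(\<chi> i. 1) \<noteq> (0 :: real ^ 'm)"
    by (simp add: vec_eq_iff)
  with d1(2) have "d1 \<noteq> 0"
    by auto
  then obtain d0 where d0: "d0 \<in> row_space D" "norm d0 = 1"
    "\<And>d. d \<in> row_space D \<Longrightarrow> (norm (D *v d0))\<^sup>2 * (norm d)\<^sup>2 \<le> (norm (D *v d))\<^sup>2"
    using row_space_minimizer_exists[OF d1(1)] by blast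
  define l where "l = (norm (D *v d0))\<^sup>2"
  have "d0 \<noteq> 0"
    using d0(2) by auto
  then have "l \<noteq> 0"
    using row_space_kernel_trivial[OF d0(1)] unfolding l_def by auto
  then have "l \<in> E"
    using \<open>d0 \<noteq> 0\<close> row_space_minimizer_gram_eigenvector[OF d0] unfolding E_def l_def by auto
  then have Min_le: "Min E \<le> l" and Min_pos: "Min E > 0"
    using \<open>finite E\<close> E_pos Min_in by auto
  have sigma: "sigma_min D = sqrt (Min E)"
    unfolding sigma_min_def E_def ..
  then show "sigma_min D > 0"
    using Min_pos by simp
  show "sigma_min D * norm d \<le> norm (D *v d)" if "d \<in> row_space D" for d
  proof (rule power2_le_imp_le)
    have "(sigma_min D * norm d)\<^sup>2 = Min E * (norm d)\<^sup>2"
      using sigma Min_pos by (simp add: power_mult_distrib)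
    also have "\<dots> \<le> l * (norm d)\<^sup>2"
      using Min_le by (simp add: mult_right_mono)
    also have "\<dots> \<le> (norm (D *v d))\<^sup>2"
      using d0(3)[OF that] unfolding l_def .
    finally show "(sigma_min D * norm d)\<^sup>2 \<le> (norm (D *v d))\<^sup>2" .
  qed simp
qed

lemma d_stationary_trimmed_l1_closer_than_feasible:
  fixes b x xbar :: "real ^ 'n" and c :: "real ^ 'm" and D :: "real ^ 'n ^ 'm"
  assumes stat: "d_stationary (\<lambda>x. (1/2) * (norm (b - x))\<^sup>2 + \<gamma> * trimmed_l1 K (D *v x - c)) x"
    and "\<gamma> \<ge> 0" and "D *v xbar = c"
  shows "norm (x - b) \<le> norm (xbar - b)"
proof -
  obtain I where I: "card I = CARD('m) - K"
    "trimmed_l1 K (D *v x - c) = (\<Sum>i\<in>I. \<bar>(D *v x - c) $ i\<bar>)"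
    using trimmed_l1_smallest_indices[where z = "D *v x - c" and K = K] by metis
  have "\<gamma> * trimmed_l1 K (D *v x - c) \<le> inner (x - b) (xbar - x)"
    using assms(3) by (intro d_stationary_trimmed_l1_descent[OF stat \<open>\<gamma> \<ge> 0\<close> I])
      (simp add: matrix_vector_mult_diff_distrib)
  moreover have "0 \<le> \<gamma> * trimmed_l1 K (D *v x - c)"
    using \<open>\<gamma> \<ge> 0\<close> trimmed_l1_nonneg by (rule mult_nonneg_nonneg)
  ultimately show ?thesis
    by (intro norm_diff_le_of_inner_nonneg) simp
qed

lemma d_stationary_trimmed_l1_sigma_min_bound:
  fixes b x :: "real ^ 'n" and c :: "real ^ 'm" and D :: "real ^ 'n ^ 'm"
  assumes surj: "surj (\<lambda>x. D *v x)"
    and stat: "d_stationary (\<lambda>x. (1/2) * (norm (b - x))\<^sup>2 + \<gamma> * trimmed_l1 K (D *v x - c)) x"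
    and "\<gamma> \<ge> 0"
  shows "sigma_min D * \<gamma> * trimmed_l1 K (D *v x - c) \<le> norm (x - b) * trimmed_l1 K (D *v x - c)"
proof -
  define z where "z = D *v x - c"
  define T where "T = trimmed_l1 K z"
  obtain I where I: "card I = CARD('m) - K" "T = (\<Sum>i\<in>I. \<bar>z $ i\<bar>)"
    using trimmed_l1_smallest_indices[where z = z and K = K] unfolding T_def by metis
  define w where "w = (\<chi> i. if i \<in> I then (- z) $ i else 0)"
  obtain d where d: "d \<in> row_space D" "D *v d = w"
    using surj_row_space_preimage[OF surj] by blast
  have "\<gamma> * T \<le> inner (x - b) d"
    using d_stationary_trimmed_l1_descent[OF stat \<open>\<gamma> \<ge> 0\<close> I(1)] I(2) d(2)
    unfolding T_def z_def w_def by simp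
  also have "\<dots> \<le> norm (x - b) * norm d"
    by (rule norm_cauchy_schwarz)
  finally have "sigma_min D * (\<gamma> * T) \<le> norm (x - b) * (sigma_min D * norm d)"
    using sigma_min_row_space_bound(1)[OF surj] mult_left_mono by (simp add: ac_simps)
  also have "\<dots> \<le> norm (x - b) * norm w"
    using sigma_min_row_space_bound(2)[OF surj d(1)] d(2) by (simp add: mult_left_mono)
  also have "\<dots> \<le> norm (x - b) * T"
    using norm_restrict_le_sum_abs[of I "- z"] I(2) unfolding w_def by (simp add: mult_left_mono)
  finally show ?thesis
    unfolding T_def z_def by (simp add: mult.assoc)
qed

theorem mainTheorem9:
  fixes b :: "real ^ 'n" and c :: "real ^ 'm" and D :: "real ^ 'n ^ 'm"
    and K :: nat and \<gamma> :: real and xstar xbar :: "real ^ 'n"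
  assumes "surj (\<lambda>x. D *v x)"
    and "K < CARD('m)"
    and "\<gamma> > 0"
    and "d_stationary (\<lambda>x. (1/2) * (norm (b - x))^2 + \<gamma> * trimmed_l1 K (D *v x - c)) xstar"
    and "D *v xbar = c"
    and "\<gamma> > norm (b - xbar) / sigma_min D"
  shows "trimmed_l1 K (D *v xstar - c) = 0"
proof (rule ccontr)
  let ?T = "trimmed_l1 K (D *v xstar - c)"
  assume "?T \<noteq> 0"
  with trimmed_l1_nonneg have "?T > 0"
    by (simp add: order_less_le)
  with d_stationary_trimmed_l1_sigma_min_bound[OF assms(1,4)] assms(3)
  have "sigma_min D * \<gamma> \<le> norm (xstar - b)"
    by simp
  also have "\<dots> \<le> norm (xbar - b)"
    using d_stationary_trimmed_l1_closer_than_feasible[OF assms(4) _ assms(5)] assms(3) by simp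
  also have "\<dots> = norm (b - xbar)"
    by (rule norm_minus_commute)
  finally show False
    using assms(6) sigma_min_row_space_bound(1)[OF assms(1)] by (simp add: divide_less_eq mult.commute)
qed

end
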